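(* Let $m,a,b,t\in\mathbb{N}$ with $m\geq 3$, $a\geq 1$, $t\in\{2,\ldots,m-1\}$ and $(t-1)(am+1)<bm+t<t(am+1)$, and let $S=\langle m,\ am+1,\ bm+t\rangle$ (a MANS-semigroup with embedding dimension $3$). Then \[ \mathrm{g}(S)=\frac{qt(t-1)+r(r+1)}{2m}(am+1)+\frac{qt(q-1)+2q(r+1)}{2m}(bm+t)-\frac{m-1}{2}, \] where $q=\left\lfloor\frac{m-1}{t}\right\rfloor$ and $r=(m-1)\bmod t$.
   Context: $\mathbb{N}=\{0,1,2,\ldots\}$. $\langle A\rangle$ is the submonoid of $(\mathbb{N},+)$ generated by $A$; a numerical semigroup is a submonoid of $\mathbb{N}$ with finite complement. $\mathrm{g}(S)=|\mathbb{N}\setminus S|$ is the genus. A MANS-semigroup is a numerical semigroup with $w(1)<\cdots<w(\mathrm{m}(S)-1)$, where $\mathrm{m}(S)$ is the least element of $S\setminus\{0\}$ and $w(i)$ the least element of $S$ congruent to $i$ modulo $\mathrm{m}(S)$. $a\bmod b$ is the remainder of the division of $a$ by $b$. *)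

theory Defs
  imports Complex_Main
begin

inductive_set monoid_gen :: "nat set \<Rightarrow> nat set" for A :: "nat set" where
  zero: "0 \<in> monoid_gen A"
| add: "x \<in> monoid_gen A \<Longrightarrow> a \<in> A \<Longrightarrow> x + a \<in> monoid_gen A"

definition genus :: "nat set \<Rightarrow> nat" where
  "genus S = card (UNIV - S)"

end

theory Submission
  imports Defs
begin

(* Since a m + 1 and b m + t are congruent to 1 and t modulo m, the element x (a m + 1) + y (b m + t)
   lies in the residue class of x + y t. The bounds (t - 1)(a m + 1) <= b m + t <= t (a m + 1) make
   w N = (N mod t)(a m + 1) + (N div t)(b m + t) monotone in N and no larger than any such
   x (a m + 1) + y (b m + t) with x + y t = N, so w i (i < m) is the Apery set of S with respect to m.
   Selmer's formula g(S) = sum (w i - i) / m then gives g(S) = a sum (i mod t) + b sum (i div t)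
   over i < m, and the closed forms of these two sums yield the stated expression. *)

lemma monoid_gen_add_closed:
  assumes "x \<in> monoid_gen A" and "y \<in> monoid_gen A"
  shows "x + y \<in> monoid_gen A"
  using assms(2) by induction (use assms(1) in \<open>auto simp: add.assoc[symmetric] intro: monoid_gen.add\<close>)

lemma monoid_gen_mult: "a \<in> A \<Longrightarrow> k * a \<in> monoid_gen A"
  by (induction k) (simp_all add: monoid_gen.zero monoid_gen.add add.commute[of a])

lemma mem_monoid_gen_three_iff:
  "s \<in> monoid_gen {n0, n1, n2} \<longleftrightarrow> (\<exists>c x y. s = c * n0 + x * n1 + y * n2)"
proof
  assume "s \<in> monoid_gen {n0, n1, n2}"
  then show "\<exists>c x y. s = c * n0 + x * n1 + y * n2"
  proof induction
    case zero
    show ?case by (intro exI[of _ 0]) simp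
  next
    case (add s g)
    then obtain c x y where "s = c * n0 + x * n1 + y * n2" by blast
    with \<open>g \<in> {n0, n1, n2}\<close> show ?case
      by (elim insertE emptyE) (metis add.assoc add.commute mult_Suc)+
  qed
next
  assume "\<exists>c x y. s = c * n0 + x * n1 + y * n2"
  then show "s \<in> monoid_gen {n0, n1, n2}"
    by (auto intro!: monoid_gen_add_closed monoid_gen_mult)
qed

lemma genus_eq_sum_Kunz_coordinates:
  fixes S :: "nat set" and k :: "nat \<Rightarrow> nat"
  assumes "m > 0" and mem_iff: "\<And>s. s \<in> S \<longleftrightarrow> k (s mod m) \<le> s div m"
  shows "genus S = (\<Sum>i<m. k i)"
proof -
  let ?h = "\<lambda>(i, l). l * m + i"
  have gaps: "UNIV - S = ?h ` (SIGMA i:{..<m}. {..<k i})"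
  proof (intro set_eqI iffI)
    fix s assume "s \<in> UNIV - S"
    then have "s div m < k (s mod m)" using mem_iff by auto
    then show "s \<in> ?h ` (SIGMA i:{..<m}. {..<k i})"
      using \<open>m > 0\<close> by (intro image_eqI[of _ _ "(s mod m, s div m)"]) auto
  next
    fix s assume "s \<in> ?h ` (SIGMA i:{..<m}. {..<k i})"
    then obtain i l where "i < m" "l < k i" "s = l * m + i" by auto
    then show "s \<in> UNIV - S" using mem_iff by auto
  qed
  have "inj_on ?h (SIGMA i:{..<m}. {..<k i})"
  proof (rule inj_onI, clarsimp)
    fix i l i' l' assume "i < m" "i' < m" "l * m + i = l' * m + i'"
    then have "(l * m + i) div m = (l' * m + i') div m" "(l * m + i) mod m = (l' * m + i') mod m"
      by simp_all
    then show "i = i' \<and> l = l'" using \<open>i < m\<close> \<open>i' < m\<close> by simp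
  qed
  then show ?thesis
    unfolding genus_def gaps by (simp add: card_image)
qed

lemma mono_mod_div_combination:
  fixes t n1 n2 :: nat
  assumes "(t - 1) * n1 \<le> n2"
  shows "mono (\<lambda>N. (N mod t) * n1 + (N div t) * n2)"
proof (rule mono_iff_le_Suc[THEN iffD2], intro allI)
  fix N
  show "(N mod t) * n1 + (N div t) * n2 \<le> (Suc N mod t) * n1 + (Suc N div t) * n2"
  proof (cases "Suc (N mod t) = t")
    case True
    then have "Suc N mod t = 0" "Suc N div t = Suc (N div t)" "N mod t = t - 1"
      by (simp_all add: mod_Suc div_Suc)
    then show ?thesis using assms by simp
  next
    case False
    then have "Suc N mod t = Suc (N mod t)" "Suc N div t = N div t"
      by (simp_all add: mod_Suc div_Suc)
    then show ?thesis by simp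
  qed
qed

lemma mod_div_combination_le:
  fixes t n1 n2 :: nat
  assumes "t > 0" and "n2 \<le> t * n1"
  shows "((x + y * t) mod t) * n1 + ((x + y * t) div t) * n2 \<le> x * n1 + y * n2"
proof -
  have "x * n1 = (x mod t) * n1 + (x div t) * (t * n1)"
    by (metis add.commute mult.assoc mult.commute div_mult_mod_eq distrib_right)
  moreover have "(x div t) * n2 \<le> (x div t) * (t * n1)" using assms(2) by simp
  moreover have "(x + y * t) div t = x div t + y" using assms(1) by simp
  ultimately show ?thesis by (simp add: algebra_simps)
qed

lemma mem_monoid_gen_iff_Kunz:
  fixes m a b t :: nat
  assumes "m > 0" and "t > 0"
    and lower: "(t - 1) * (a * m + 1) \<le> b * m + t" and upper: "b * m + t \<le> t * (a * m + 1)"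
  shows "s \<in> monoid_gen {m, a * m + 1, b * m + t}
           \<longleftrightarrow> (s mod m mod t) * a + (s mod m div t) * b \<le> s div m"
proof -
  define w where "w N = (N mod t) * (a * m + 1) + (N div t) * (b * m + t)" for N
  define k where "k N = (N mod t) * a + (N div t) * b" for N
  have w_eq: "w N = m * k N + N" for N
    using mod_mult_div_eq[of N t] unfolding w_def k_def by (simp add: algebra_simps)
  have "s \<in> monoid_gen {m, a * m + 1, b * m + t} \<longleftrightarrow> k (s mod m) \<le> s div m"
  proof
    assume "s \<in> monoid_gen {m, a * m + 1, b * m + t}"
    then obtain c x y where s: "s = c * m + x * (a * m + 1) + y * (b * m + t)"
      unfolding mem_monoid_gen_three_iff by blast
    have "s = (x + y * t) + m * (c + x * a + y * b)"
      unfolding s by (simp add: algebra_simps)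
    then have "s mod m = (x + y * t) mod m"
      by (metis mod_mult_self1 mult.commute)
    then have "s mod m \<le> x + y * t" by simp
    moreover have "mono w"
      unfolding w_def by (rule mono_mod_div_combination[OF lower])
    ultimately have "w (s mod m) \<le> w (x + y * t)" by (simp add: monoD)
    also have "\<dots> \<le> x * (a * m + 1) + y * (b * m + t)"
      unfolding w_def using mod_div_combination_le[OF \<open>t > 0\<close> upper] .
    also have "\<dots> \<le> s" unfolding s by simp
    finally have "m * k (s mod m) + s mod m \<le> m * (s div m) + s mod m"
      by (simp add: w_eq)
    then have "m * k (s mod m) \<le> m * (s div m)" by (rule add_le_imp_le_right)
    then show "k (s mod m) \<le> s div m" using \<open>m > 0\<close> by simp
  next
    assume "k (s mod m) \<le> s div m"
    then have "s = (s div m - k (s mod m)) * m + w (s mod m)"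
      unfolding w_eq by (simp add: algebra_simps)
    then show "s \<in> monoid_gen {m, a * m + 1, b * m + t}"
      unfolding mem_monoid_gen_three_iff w_def by (metis add.assoc)
  qed
  then show ?thesis unfolding k_def .
qed

lemma genus_monoid_gen_three:
  fixes m a b t :: nat
  assumes "m > 0" and "t > 0"
    and "(t - 1) * (a * m + 1) \<le> b * m + t" and "b * m + t \<le> t * (a * m + 1)"
  shows "genus (monoid_gen {m, a * m + 1, b * m + t})
           = a * (\<Sum>i<m. i mod t) + b * (\<Sum>i<m. i div t)"
proof -
  have "genus (monoid_gen {m, a * m + 1, b * m + t}) = (\<Sum>i<m. (i mod t) * a + (i div t) * b)"
    using assms by (intro genus_eq_sum_Kunz_coordinates mem_monoid_gen_iff_Kunz)
  then show ?thesis by (simp add: sum.distrib sum_distrib_left mult.commute)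
qed

lemma sum_mod_atMost:
  fixes t :: nat
  assumes "t > 0"
  shows "2 * (\<Sum>i\<le>n. i mod t) = (n div t) * t * (t - 1) + (n mod t) * (n mod t + 1)"
proof (induction n)
  case 0 then show ?case by simp
next
  case (Suc n)
  have step: "2 * (\<Sum>i\<le>Suc n. i mod t) = 2 * (\<Sum>i\<le>n. i mod t) + 2 * (Suc n mod t)" by simp
  show ?case
  proof (cases "Suc (n mod t) = t")
    case True
    then have h: "Suc n mod t = 0" "Suc n div t = Suc (n div t)" "n mod t = t - 1"
      by (simp_all add: mod_Suc div_Suc)
    have "(n div t) * t * (t - 1) + (t - 1) * (t - 1 + 1) = Suc (n div t) * t * (t - 1)"
      using assms by (simp add: algebra_simps)
    then show ?thesis unfolding step Suc.IH h by simp
  next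
    case False
    then have h: "Suc n mod t = Suc (n mod t)" "Suc n div t = n div t" by (simp_all add: mod_Suc div_Suc)
    show ?thesis unfolding step Suc.IH h by (simp add: algebra_simps)
  qed
qed

lemma sum_div_atMost:
  fixes t :: nat
  assumes "t > 0"
  shows "2 * (\<Sum>i\<le>n. i div t) = (n div t) * t * (n div t - 1) + 2 * (n div t) * (n mod t + 1)"
proof (induction n)
  case 0 then show ?case by simp
next
  case (Suc n)
  have step: "2 * (\<Sum>i\<le>Suc n. i div t) = 2 * (\<Sum>i\<le>n. i div t) + 2 * (Suc n div t)" by simp
  show ?case
  proof (cases "Suc (n mod t) = t")
    case True
    then have h: "Suc n mod t = 0" "Suc n div t = Suc (n div t)" "n mod t = t - 1"
      by (simp_all add: mod_Suc div_Suc)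
    have "(n div t) * t * (n div t - 1) + 2 * (n div t) * (t - 1 + 1) + 2 * Suc (n div t)
        = Suc (n div t) * t * (Suc (n div t) - 1) + 2 * Suc (n div t) * (0 + 1)"
      using assms by (cases "n div t") (simp_all add: algebra_simps)
    then show ?thesis unfolding step Suc.IH h by simp
  next
    case False
    then have h: "Suc n mod t = Suc (n mod t)" "Suc n div t = n div t" by (simp_all add: mod_Suc div_Suc)
    show ?thesis unfolding step Suc.IH h by (simp add: algebra_simps)
  qed
qed

theorem proposition3p13:
  fixes m a b t :: nat
  assumes "m \<ge> 3" and "a \<ge> 1" and "2 \<le> t" and "t \<le> m - 1"
    and "(t - 1) * (a * m + 1) < b * m + t" and "b * m + t < t * (a * m + 1)"
  shows "let S = monoid_gen {m, a * m + 1, b * m + t};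
             q = (m - 1) div t; r = (m - 1) mod t
         in real (genus S) =
              real (q * t * (t - 1) + r * (r + 1)) / (2 * real m) * real (a * m + 1)
            + real (q * t * (q - 1) + 2 * q * (r + 1)) / (2 * real m) * real (b * m + t)
            - (real m - 1) / 2"
proof -
  define n where "n = m - 1"
  define X where "X = (\<Sum>i\<le>n. i mod t)"
  define Y where "Y = (\<Sum>i\<le>n. i div t)"
  have "t > 0" and m_eq: "m = Suc n" using assms by (auto simp: n_def)
  then have genus: "genus (monoid_gen {m, a * m + 1, b * m + t}) = a * X + b * Y"
    using assms genus_monoid_gen_three[of m t a b]
    unfolding X_def Y_def by (simp add: lessThan_Suc_atMost)
  have "X + t * Y = (\<Sum>i = 0..n. i)"
    unfolding X_def Y_def
    by (simp only: sum_distrib_left sum.distrib[symmetric] mod_mult_div_eq atLeast0AtMost)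
  then have "2 * (X + t * Y) = n * (n + 1)"
    using double_gauss_sum[of n, where ?'a = nat] by simp
  then have XY: "2 * (real X + real t * real Y) = real n * (real n + 1)"
    by (metis of_nat_add of_nat_mult of_nat_1 of_nat_numeral)
  have X_closed: "n div t * t * (t - 1) + n mod t * (n mod t + 1) = 2 * X"
    unfolding X_def using sum_mod_atMost \<open>t > 0\<close> by simp
  have Y_closed: "n div t * t * (n div t - 1) + 2 * (n div t) * (n mod t + 1) = 2 * Y"
    unfolding Y_def using sum_div_atMost \<open>t > 0\<close> by simp
  have "real m > 0" using m_eq by simp
  then have "real (2 * X) / (2 * real m) * real (a * m + 1) + real (2 * Y) / (2 * real m) * real (b * m + t)
      = real (a * X + b * Y) + (real X + real t * real Y) / real m"
    by (simp add: field_simps)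
  moreover have "(real X + real t * real Y) / real m = (real m - 1) / 2"
    using XY m_eq by (simp add: field_simps)
  ultimately have "real (genus (monoid_gen {m, a * m + 1, b * m + t}))
      = real (2 * X) / (2 * real m) * real (a * m + 1) + real (2 * Y) / (2 * real m) * real (b * m + t)
        - (real m - 1) / 2"
    unfolding genus by linarith
  then show ?thesis
    unfolding Let_def n_def[symmetric] X_closed Y_closed .
qed

end
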